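(* Let \(a,b,c\) be positive integers, \(m\) a positive integer that is not a perfect square, with \(\gcd(am,b^2-c^2m)=1\), and let \(A,B\in\mathbb Z\). If \((x_0,y_0,z_0,w_0)\in\mathbb Z^4\) and \((x',y',z',w')\in\mathbb Z^4\) are both solutions of \(a\sqrt m(x+y\sqrt m)+(b+c\sqrt m)(z+w\sqrt m)=A+B\sqrt m\), then \(am\mid z_0-z'\) and \(a\mid w_0-w'\). *)

theory Defs
  imports Complex_Main
begin

end

theory Submission
  imports Defs "HOL-Computational_Algebra.Nth_Powers"
begin

text \<open>Since \<open>\<surd>m\<close> is irrational, an element of \<open>\<int>[\<surd>m]\<close> has unique integer
  coordinates, so the equation splits into two integer equations. Subtracting them for
  the two solutions gives a homogeneous linear system in the differences \<open>X, Y, Z, W\<close>;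
  eliminating with the norm \<open>b\<^sup>2 - c\<^sup>2m\<close> of \<open>b + c\<surd>m\<close> shows that this norm times \<open>Z\<close> is a
  multiple of \<open>am\<close> and the norm times \<open>W\<close> a multiple of \<open>a\<close>, and coprimality cancels it.\<close>

lemma sqrt_of_int_not_Rats:
  fixes m :: int
  assumes "m > 0" "\<not> (\<exists>k::int. m = k ^ 2)"
  shows "sqrt (of_int m) \<notin> \<rat>"
proof
  assume "sqrt (of_int m) \<in> \<rat>"
  then obtain p q :: int where q: "q > 0" and e: "sqrt (of_int m) = of_int p / of_int q"
    by (auto elim: Rats_cases')
  have "of_int m = (of_int p / of_int q :: real) ^ 2"
    using e assms(1) by (metis of_int_0_less_iff less_imp_le real_sqrt_pow2)
  hence "of_int m * of_int q ^ 2 = (of_int p ^ 2 :: real)"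
    using q by (simp add: field_simps power2_eq_square)
  hence "m * q ^ 2 = p ^ 2"
    by (metis of_int_eq_iff of_int_mult of_int_power)
  hence "is_nth_power 2 (m * q ^ 2)" by simp
  hence "is_nth_power 2 m"
    using is_nth_power_mult_cancel_right[of 2 "q ^ 2" m] q by simp
  thus False using assms(2) by (auto elim: is_nth_powerE)
qed

lemma of_int_add_mult_sqrt_eq_iff:
  fixes m P Q P' Q' :: int
  assumes "m > 0" "\<not> (\<exists>k::int. m = k ^ 2)"
  shows "of_int P + of_int Q * sqrt (of_int m) = of_int P' + of_int Q' * sqrt (of_int m)
           \<longleftrightarrow> P = P' \<and> Q = Q'"
proof
  assume eq: "of_int P + of_int Q * sqrt (of_int m) = of_int P' + of_int Q' * sqrt (of_int m)"
  have "Q = Q'"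
  proof (rule ccontr)
    assume "Q \<noteq> Q'"
    with eq have "sqrt (of_int m) = of_int (P' - P) / of_int (Q - Q')"
      by (simp add: field_simps)
    hence "sqrt (of_int m) \<in> \<rat>" by simp
    thus False using sqrt_of_int_not_Rats assms by blast
  qed
  with eq show "P = P' \<and> Q = Q'" by simp
qed simp

lemma mult_sqrt_coordinates:
  fixes m a b c x y z w :: int
  assumes "m \<ge> 0"
  shows "of_int a * sqrt (of_int m) * (of_int x + of_int y * sqrt (of_int m))
           + (of_int b + of_int c * sqrt (of_int m)) * (of_int z + of_int w * sqrt (of_int m))
         = of_int (a*m*y + b*z + c*m*w) + of_int (a*x + b*w + c*z) * sqrt (of_int m)"
proof -
  have "sqrt (of_int m) * sqrt (of_int m) = of_int m"
    using assms by simp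
  thus ?thesis by (simp add: algebra_simps)
qed

text \<open>Cramer's rule for the \<open>(Z, W)\<close>-part of the system, whose determinant is the norm
  \<open>b\<^sup>2 - c\<^sup>2m\<close>.\<close>

lemma norm_mult_solution:
  fixes a b c m X Y Z W :: "'a :: comm_ring_1"
  assumes "a*m*Y + b*Z + c*m*W = 0" and "a*X + b*W + c*Z = 0"
  shows "(b^2 - c^2*m) * Z = a*m*(c*X - b*Y)"
    and "(b^2 - c^2*m) * W = a*(c*m*Y - b*X)"
proof -
  have Z: "b*Z + c*m*W = -(a*m*Y)" and W: "c*Z + b*W = -(a*X)"
    using assms by (simp_all add: eq_neg_iff_add_eq_0 algebra_simps)
  have "(b^2 - c^2*m) * Z = b*(b*Z + c*m*W) - c*m*(c*Z + b*W)"
    by (simp add: algebra_simps power2_eq_square)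
  thus "(b^2 - c^2*m) * Z = a*m*(c*X - b*Y)"
    unfolding Z W by (simp add: algebra_simps)
  have "(b^2 - c^2*m) * W = b*(c*Z + b*W) - c*(b*Z + c*m*W)"
    by (simp add: algebra_simps power2_eq_square)
  thus "(b^2 - c^2*m) * W = a*(c*m*Y - b*X)"
    unfolding Z W by (simp add: algebra_simps)
qed

theorem lemma9:
  fixes a b c m A B x0 y0 z0 w0 x' y' z' w' :: int
  assumes "a > 0" and "b > 0" and "c > 0" and "m > 0"
    and "\<not> (\<exists>k::int. m = k ^ 2)"
    and "gcd (a * m) (b ^ 2 - c ^ 2 * m) = 1"
    and "of_int a * sqrt (of_int m) * (of_int x0 + of_int y0 * sqrt (of_int m))
         + (of_int b + of_int c * sqrt (of_int m)) * (of_int z0 + of_int w0 * sqrt (of_int m))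
         = of_int A + of_int B * sqrt (of_int m)"
    and "of_int a * sqrt (of_int m) * (of_int x' + of_int y' * sqrt (of_int m))
         + (of_int b + of_int c * sqrt (of_int m)) * (of_int z' + of_int w' * sqrt (of_int m))
         = of_int A + of_int B * sqrt (of_int m)"
  shows "a * m dvd z0 - z' \<and> a dvd w0 - w'"
proof -
  note coords = of_int_add_mult_sqrt_eq_iff[OF \<open>m > 0\<close> assms(5)]
  have "a*m*y0 + b*z0 + c*m*w0 = A" "a*x0 + b*w0 + c*z0 = B"
    using assms(7) by (simp_all only: mult_sqrt_coordinates \<open>m > 0\<close> less_imp_le coords)
  moreover have "a*m*y' + b*z' + c*m*w' = A" "a*x' + b*w' + c*z' = B"
    using assms(8) by (simp_all only: mult_sqrt_coordinates \<open>m > 0\<close> less_imp_le coords)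
  ultimately have "a*m*(y0 - y') + b*(z0 - z') + c*m*(w0 - w') = 0"
    and "a*(x0 - x') + b*(w0 - w') + c*(z0 - z') = 0"
    by (simp_all add: algebra_simps)
  note norm_eqs = norm_mult_solution[OF this]
  have "coprime (a*m) (b^2 - c^2*m)"
    using assms(6) by (simp add: coprime_iff_gcd_eq_1)
  moreover have "a*m dvd (b^2 - c^2*m) * (z0 - z')" and "a dvd (b^2 - c^2*m) * (w0 - w')"
    unfolding norm_eqs by simp_all
  ultimately show ?thesis
    by (auto simp: coprime_dvd_mult_right_iff)
qed

end
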